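(* Let $n\ge2$ and let $\mathbb{K}$ be a field with $\operatorname{char}\mathbb{K}$ either $0$ or coprime to both $n$ and $n-1$. Let $A_n=\mathbb{K}[x,y]/(y^{2n+3},\, x^ny^2-y^{n+2},\, x^{2n+1}-xy^{n+1})$. Then every $\mathbb{K}$-linear derivation $\partial\colon A_n\to A_n$ satisfies $\partial(y^{2n+1})=0$.
   Context: A derivation of $A_n$ is a $\mathbb{K}$-linear map $\partial\colon A_n\to A_n$ satisfying $\partial(uv)=\partial(u)v+u\partial(v)$ for all $u,v\in A_n$. *)

theory Defs
  imports "HOL-Library.Poly_Mapping" "HOL-Library.Product_Plus"
begin

text \<open>Bivariate polynomials K[x,y]: finitely supported maps from exponent pairs (i,j)
  (monomial x^i y^j) to coefficients, with convolution product.\<close>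
type_synonym 'k bipoly = "(nat \<times> nat) \<Rightarrow>\<^sub>0 'k"

definition bvX :: "'k::field bipoly" where "bvX = Poly_Mapping.single (1,0) 1"
definition bvY :: "'k::field bipoly" where "bvY = Poly_Mapping.single (0,1) 1"
definition bconst :: "'k::field \<Rightarrow> 'k bipoly" where "bconst c = Poly_Mapping.single (0,0) c"

definition An_ideal :: "nat \<Rightarrow> 'k::field bipoly set" where
  "An_ideal n = {a * bvY ^ (2*n+3) + b * (bvX ^ n * bvY ^ 2 - bvY ^ (n+2))
                 + c * (bvX ^ (2*n+1) - bvX * bvY ^ (n+1)) | a b c. True}"

text \<open>Equality in A_n = K[x,y]/I, expressed on representatives.\<close>
definition An_eq :: "nat \<Rightarrow> 'k::field bipoly \<Rightarrow> 'k bipoly \<Rightarrow> bool" where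
  "An_eq n p q \<longleftrightarrow> p - q \<in> An_ideal n"

definition An_derivation :: "nat \<Rightarrow> ('k::field bipoly \<Rightarrow> 'k bipoly) \<Rightarrow> bool" where
  "An_derivation n D \<longleftrightarrow>
     (\<forall>p q. An_eq n p q \<longrightarrow> An_eq n (D p) (D q)) \<and>
     (\<forall>p q. An_eq n (D (p + q)) (D p + D q)) \<and>
     (\<forall>c p. An_eq n (D (bconst c * p)) (bconst c * D p)) \<and>
     (\<forall>p q. An_eq n (D (p * q)) (D p * q + p * D q))"

end

theory Submission
  imports Defs
begin

text \<open>Write \<open>f = \<partial>x\<close> and \<open>g = \<partial>y\<close>. Differentiating the relations \<open>x^n y^2 = y^(n+2)\<close> and
  \<open>x^(2n+1) = x y^(n+1)\<close> gives two linear relations between \<open>f\<close> and \<open>g\<close>. Multiplied by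
  \<open>y^(n-1)\<close> and \<open>x^(n-1)\<close> and reduced with the defining relations, they become
  \<open>n x^(n-1) y^(n+1) f = n y^(2n) g\<close> and \<open>2n x^(n-1) y^(n+1) f = (n+1) y^(2n) g\<close>,
  hence \<open>(n-1) y^(2n) g = 0\<close>. As \<open>\<partial>(y^(2n+1)) = (2n+1) y^(2n) g\<close> and \<open>n-1\<close> is invertible
  in \<open>\<bbbK>\<close>, the claim follows.\<close>

lemma of_nat_neq_0_if_coprime_CHAR:
  assumes "0 < k" and "CHAR('a::{semiring_1,zero_neq_one}) = 0 \<or> coprime CHAR('a) k"
  shows "of_nat k \<noteq> (0::'a)"
proof
  assume "of_nat k = (0::'a)"
  then have "CHAR('a) dvd k"
    by (simp add: of_nat_eq_0_iff_char_dvd)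
  with assms have "is_unit CHAR('a)"
    by (auto intro: coprime_common_divisor)
  then show False
    by simp
qed

lemma of_nat_poly_mapping_dvd_one:
  assumes "of_nat k \<noteq> (0::'b::field)"
  shows "(of_nat k :: 'a::comm_monoid_add \<Rightarrow>\<^sub>0 'b) dvd 1"
proof
  show "1 = of_nat k * Poly_Mapping.single 0 (inverse (of_nat k :: 'b))"
    using assms by (simp flip: single_of_nat add: mult_single)
qed

text \<open>The coefficients come from reducing \<open>y^(n-1)\<close> and \<open>x^(n-1)\<close> times the differentiated
  relations modulo the relations themselves, written with \<open>n = m + 2\<close>.\<close>

lemma socle_identity:
  fixes x y f g :: "'a::comm_ring_1"
  shows "of_nat (m + 1) * y ^ (2 * m + 4) * g =
      x ^ (m + 1) * (of_nat (2 * m + 5) * x ^ (2 * m + 4) * f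
        - (f * y ^ (m + 3) + x * (of_nat (m + 3) * y ^ (m + 2) * g)))
    + 2 * y ^ (m + 1) * (of_nat (m + 4) * y ^ (m + 3) * g
        - (of_nat (m + 2) * x ^ (m + 1) * f * y ^ 2 + x ^ (m + 2) * (2 * y * g)))
    + of_nat (m + 7) * y ^ m * g * (x ^ (m + 2) * y ^ 2 - y ^ (m + 4))
    - of_nat (2 * m + 5) * x ^ m * f * (x ^ (2 * m + 5) - x * y ^ (m + 3))"
proof -
  have "x ^ (m + 1) = x ^ m * x" "x ^ (m + 2) = x ^ m * x ^ 2"
    "x ^ (2 * m + 4) = x ^ m * x ^ m * x ^ 4" "x ^ (2 * m + 5) = x ^ m * x ^ m * x ^ 5"
    "y ^ (m + 1) = y ^ m * y" "y ^ (m + 2) = y ^ m * y ^ 2" "y ^ (m + 3) = y ^ m * y ^ 3"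
    "y ^ (m + 4) = y ^ m * y ^ 4" "y ^ (2 * m + 4) = y ^ m * y ^ m * y ^ 4"
    by (simp_all only: power_add mult_2 power_one_right)
  then show ?thesis
    by (simp add: algebra_simps power2_eq_square power3_eq_cube eval_nat_numeral)
qed

lemmas Suc_plus_numeral = Suc_eq_plus1 add.assoc one_add_one numeral_plus_one add_num_simps

locale ring_ideal =
  fixes I :: "'a::comm_ring_1 set"
  assumes zero_mem: "0 \<in> I"
    and add_mem: "p \<in> I \<Longrightarrow> q \<in> I \<Longrightarrow> p + q \<in> I"
    and mult_mem: "p \<in> I \<Longrightarrow> r * p \<in> I"
begin

definition mod_eq :: "'a \<Rightarrow> 'a \<Rightarrow> bool" (infix \<open>\<approx>\<close> 50)
  where "p \<approx> q \<longleftrightarrow> p - q \<in> I"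

lemma diff_mem: "p \<in> I \<Longrightarrow> q \<in> I \<Longrightarrow> p - q \<in> I"
  using add_mem[of p "(-1) * q"] mult_mem[of q "-1"] by simp

lemma mod_eq_refl: "p \<approx> p"
  by (simp add: mod_eq_def zero_mem)

lemma mod_eq_sym: "p \<approx> q \<Longrightarrow> q \<approx> p"
  unfolding mod_eq_def using diff_mem[OF zero_mem] by fastforce

lemma mod_eq_trans [trans]: "p \<approx> q \<Longrightarrow> q \<approx> r \<Longrightarrow> p \<approx> r"
  unfolding mod_eq_def using add_mem by fastforce

lemma mod_eq_add: "p \<approx> p' \<Longrightarrow> q \<approx> q' \<Longrightarrow> p + q \<approx> p' + q'"
  unfolding mod_eq_def using add_mem by (fastforce simp: algebra_simps)

lemma mod_eq_mult: "p \<approx> p' \<Longrightarrow> q \<approx> q' \<Longrightarrow> p * q \<approx> p' * q'"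
proof -
  assume "p \<approx> p'" "q \<approx> q'"
  then have "q * (p - p') + p' * (q - q') \<in> I"
    unfolding mod_eq_def by (intro add_mem mult_mem)
  then show "p * q \<approx> p' * q'"
    unfolding mod_eq_def by (simp add: algebra_simps)
qed

lemma mod_eq_mem: "p \<approx> q \<Longrightarrow> q \<in> I \<Longrightarrow> p \<in> I"
  unfolding mod_eq_def using add_mem by fastforce

lemma mem_if_unit_mult_mem: "u dvd 1 \<Longrightarrow> u * p \<in> I \<Longrightarrow> p \<in> I"
  by (metis dvd_mult_unit_iff' dvdE mult.assoc mult.commute mult_1 mult_mem)

end

text \<open>Additivity is not assumed: the argument only ever differentiates products.\<close>

locale derivation_mod = ring_ideal I for I :: "'a::comm_ring_1 set" +
  fixes D :: "'a \<Rightarrow> 'a"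
  assumes D_cong: "p \<approx> q \<Longrightarrow> D p \<approx> D q"
    and D_leibniz: "D (p * q) \<approx> D p * q + p * D q"
begin

lemma D_power: "D (p ^ Suc k) \<approx> of_nat (Suc k) * p ^ k * D p"
proof (induction k)
  case 0
  show ?case
    by (simp add: mod_eq_refl)
next
  case (Suc k)
  have "D (p ^ Suc (Suc k)) \<approx> D p * p ^ Suc k + p * D (p ^ Suc k)"
    using D_leibniz by simp
  also have "\<dots> \<approx> D p * p ^ Suc k + p * (of_nat (Suc k) * p ^ k * D p)"
    by (intro mod_eq_add mod_eq_mult mod_eq_refl Suc.IH)
  also have "\<dots> = of_nat (Suc (Suc k)) * p ^ Suc k * D p"
    by (simp add: algebra_simps)
  finally show ?case .
qed

lemma D_first_relation:
  assumes "x ^ (m + 2) * y ^ 2 \<approx> y ^ (m + 4)"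
  shows "of_nat (m + 4) * y ^ (m + 3) * D y
    \<approx> of_nat (m + 2) * x ^ (m + 1) * D x * y ^ 2 + x ^ (m + 2) * (2 * y * D y)"
proof -
  have "of_nat (m + 4) * y ^ (m + 3) * D y \<approx> D (y ^ (m + 4))"
    using D_power[of y "m + 3"] unfolding Suc_plus_numeral by (rule mod_eq_sym)
  also have "\<dots> \<approx> D (x ^ (m + 2) * y ^ 2)"
    using mod_eq_sym[OF assms] by (rule D_cong)
  also have "\<dots> \<approx> D (x ^ (m + 2)) * y ^ 2 + x ^ (m + 2) * D (y ^ 2)"
    by (rule D_leibniz)
  also have "\<dots> \<approx> of_nat (m + 2) * x ^ (m + 1) * D x * y ^ 2 + x ^ (m + 2) * (2 * y * D y)"
    using D_power[of x "m + 1", unfolded Suc_plus_numeral] D_power[of y 1]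
    by (intro mod_eq_add mod_eq_mult mod_eq_refl) (simp_all add: numeral_2_eq_2)
  finally show ?thesis .
qed

lemma D_second_relation:
  assumes "x ^ (2 * m + 5) \<approx> x * y ^ (m + 3)"
  shows "of_nat (2 * m + 5) * x ^ (2 * m + 4) * D x
    \<approx> D x * y ^ (m + 3) + x * (of_nat (m + 3) * y ^ (m + 2) * D y)"
proof -
  have "of_nat (2 * m + 5) * x ^ (2 * m + 4) * D x \<approx> D (x ^ (2 * m + 5))"
    using D_power[of x "2 * m + 4"] unfolding Suc_plus_numeral by (rule mod_eq_sym)
  also have "\<dots> \<approx> D (x * y ^ (m + 3))"
    using assms by (rule D_cong)
  also have "\<dots> \<approx> D x * y ^ (m + 3) + x * D (y ^ (m + 3))"
    by (rule D_leibniz)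
  also have "\<dots> \<approx> D x * y ^ (m + 3) + x * (of_nat (m + 3) * y ^ (m + 2) * D y)"
    using D_power[of y "m + 2", unfolded Suc_plus_numeral] by (intro mod_eq_add mod_eq_mult mod_eq_refl)
  finally show ?thesis .
qed

lemma D_power_socle_torsion:
  assumes "2 \<le> n"
    and rel_y: "x ^ n * y ^ 2 - y ^ (n + 2) \<in> I"
    and rel_x: "x ^ (2 * n + 1) - x * y ^ (n + 1) \<in> I"
  shows "of_nat (n - 1) * D (y ^ (2 * n + 1)) \<in> I"
proof -
  obtain m where m: "n = m + 2"
    using assms(1) by (metis add.commute le_Suc_ex)
  then have exps: "n + 1 = m + 3" "n + 2 = m + 4" "2 * n + 1 = 2 * m + 5" "n - 1 = m + 1"
    by simp_all
  have G2: "x ^ (m + 2) * y ^ 2 \<approx> y ^ (m + 4)"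
    using rel_y unfolding mod_eq_def exps unfolding m .
  have G3: "x ^ (2 * m + 5) \<approx> x * y ^ (m + 3)"
    using rel_x unfolding mod_eq_def exps .
  have "of_nat (m + 1) * D (y ^ (2 * m + 5))
      \<approx> of_nat (2 * m + 5) * (of_nat (m + 1) * y ^ (2 * m + 4) * D y)"
    using mod_eq_mult[OF mod_eq_refl D_power[of y "2 * m + 4"], of "of_nat (m + 1)"]
    unfolding Suc_plus_numeral by (simp add: algebra_simps)
  moreover have "of_nat (m + 1) * y ^ (2 * m + 4) * D y \<in> I"
    unfolding socle_identity[of m y "D y" x "D x"]
    using D_first_relation[OF G2] D_second_relation[OF G3] G2 G3 unfolding mod_eq_def
    by (intro diff_mem[OF add_mem[OF add_mem] mult_mem] mult_mem)
  ultimately show ?thesis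
    unfolding exps by (auto intro: mod_eq_mem mult_mem)
qed

end

lemma ring_ideal_linear_combinations:
  fixes g1 g2 g3 :: "'a::comm_ring_1"
  shows "ring_ideal {a * g1 + b * g2 + c * g3 | a b c. True}" (is "ring_ideal ?J")
proof
  show "0 \<in> ?J"
    by (rule CollectI, intro exI[of _ 0]) simp
next
  fix p q
  assume "p \<in> ?J" "q \<in> ?J"
  then obtain a b c a' b' c' where "p = a * g1 + b * g2 + c * g3" "q = a' * g1 + b' * g2 + c' * g3"
    by blast
  then have "p + q = (a + a') * g1 + (b + b') * g2 + (c + c') * g3"
    by (simp add: algebra_simps)
  then show "p + q \<in> ?J"
    by blast
next
  fix p r
  assume "p \<in> ?J"
  then obtain a b c where "p = a * g1 + b * g2 + c * g3"
    by blast
  then have "r * p = (r * a) * g1 + (r * b) * g2 + (r * c) * g3"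
    by (simp add: algebra_simps)
  then show "r * p \<in> ?J"
    by blast
qed

lemma ring_ideal_An_ideal: "ring_ideal (An_ideal n)"
  unfolding An_ideal_def by (rule ring_ideal_linear_combinations)

lemma An_ideal_relations:
  "bvX ^ n * bvY ^ 2 - bvY ^ (n + 2) \<in> An_ideal n"
  "bvX ^ (2 * n + 1) - bvX * bvY ^ (n + 1) \<in> An_ideal n"
  unfolding An_ideal_def by (force intro: exI[of _ 0] exI[of _ 1])+

lemma derivation_mod_An_ideal:
  assumes "An_derivation n D"
  shows "derivation_mod (An_ideal n) D"
proof -
  interpret ring_ideal "An_ideal n"
    by (rule ring_ideal_An_ideal)
  show ?thesis
    by unfold_locales (use assms in \<open>simp_all add: An_derivation_def An_eq_def mod_eq_def\<close>)
qed

theorem theorem1p5: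
  fixes n :: nat and D :: "'k::field bipoly \<Rightarrow> 'k bipoly"
  assumes "n \<ge> 2"
    and "CHAR('k) = 0 \<or> (coprime CHAR('k) n \<and> coprime CHAR('k) (n - 1))"
    and "An_derivation n D"
  shows "An_eq n (D (bvY ^ (2*n+1))) 0"
proof -
  interpret derivation_mod "An_ideal n" D
    using assms(3) by (rule derivation_mod_An_ideal)
  have "of_nat (n - 1) * D (bvY ^ (2 * n + 1)) \<in> An_ideal n"
    using assms(1) An_ideal_relations by (rule D_power_socle_torsion)
  moreover have "(of_nat (n - 1) :: 'k bipoly) dvd 1"
    using assms(1,2) by (intro of_nat_poly_mapping_dvd_one of_nat_neq_0_if_coprime_CHAR) auto
  ultimately show ?thesis
    unfolding An_eq_def by (simp add: mem_if_unit_mult_mem)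
qed

end
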